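(* Let $s\geq1$ be an integer and let $X$ and $Y$ be random variables with absolutely continuous distributions with densities $f_X$ and $f_Y$ and distribution functions $F_X,F_Y\in\mathcal{F}$. If, for some positive integer $k\leq s$ and every $a>0$ and $b\in\mathbb{R}$, the function $$ H_k(x)=\frac{1}{\prod_{j=1}^{k}\widetilde{\mu}_{Y,s-j}}\overline{T}_{Y,s-k}(x)-\frac{a^{k}}{\prod_{j=1}^{k}\widetilde{\mu}_{X,s-j}}\overline{T}_{X,s-k}(ax+b) $$ changes sign at most twice as $x$ traverses from $0$ to $+\infty$, and if the change of sign occurs twice it is in the order "$+,-,+$", then $F_X\leq_{s\text{-IFR}}F_Y$.
   Context: $\mathcal{F}$ denotes the family of distribution functions $F$ with $F(0)=0$ whose probability distribution has support contained in $[0,\infty)$. For a nonnegative random variable $X$ with density $f_X$: $\overline{T}_{X,0}=f_X$, $\widetilde{\mu}_{X,0}=1$, and for $s\geq1$, $x\geq0$, $\overline{T}_{X,s}(x)=\frac{1}{\widetilde{\mu}_{X,s-1}}\int_x^\infty \overline{T}_{X,s-1}(t)\,dt$ with $\widetilde{\mu}_{X,s}=\int_0^\infty \overline{T}_{X,s}(t)\,dt$, and $\overline{T}_{X,s}(x)=1$ for $x<0$ (for $s\geq1$). We write $F_X\leq_{s\text{-IFR}}F_Y$ ("$X$ is more $s$-IFR than $Y$") if $c_s(x)=\overline{T}_{Y,s}^{-1}(\overline{T}_{X,s}(x))$ is convex. *)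

theory Defs
  imports "HOL-Probability.Probability"
begin

definition distF_family :: "(real \<Rightarrow> real) set" where
  "distF_family = {F. F 0 = 0 \<and> (\<forall>x<0. F x = 0)}"

fun Tbar :: "(real \<Rightarrow> real) \<Rightarrow> nat \<Rightarrow> real \<Rightarrow> real" where
  "Tbar f 0 = f"
| "Tbar f (Suc s) = (\<lambda>x. if x < 0 then 1
      else (LBINT t:{x..}. Tbar f s t) / (if s = 0 then 1 else (LBINT t:{0..}. Tbar f s t)))"

definition mu_tilde :: "(real \<Rightarrow> real) \<Rightarrow> nat \<Rightarrow> real" where
  "mu_tilde f s = (if s = 0 then 1 else (LBINT t:{0..}. Tbar f s t))"

lemma Tbar_Suc: "Tbar f (Suc s) x = (if x < 0 then 1 else (LBINT t:{x..}. Tbar f s t) / mu_tilde f s)"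
  by (simp add: mu_tilde_def)

definition Tinv :: "(real \<Rightarrow> real) \<Rightarrow> real \<Rightarrow> real" where
  "Tinv T u = Inf {y. 0 \<le> y \<and> T y \<le> u}"

definition s_IFR_le :: "nat \<Rightarrow> (real \<Rightarrow> real) \<Rightarrow> (real \<Rightarrow> real) \<Rightarrow> bool" where
  "s_IFR_le s fX fY \<longleftrightarrow>
     convex_on {x. 0 \<le> x \<and> 0 < Tbar fX s x} (\<lambda>x. Tinv (Tbar fY s) (Tbar fX s x))"

definition sign_seq :: "(real \<Rightarrow> real) \<Rightarrow> real set \<Rightarrow> (nat \<Rightarrow> real) \<Rightarrow> nat \<Rightarrow> bool" where
  "sign_seq H S xs n \<longleftrightarrow> (\<forall>i\<le>n. xs i \<in> S) \<and>
     (\<forall>i<n. xs i < xs (Suc i) \<and> H (xs i) * H (xs (Suc i)) < 0)"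

definition sign_changes_le2_pmp :: "(real \<Rightarrow> real) \<Rightarrow> real set \<Rightarrow> bool" where
  "sign_changes_le2_pmp H S \<longleftrightarrow> \<not> (\<exists>xs. sign_seq H S xs 3) \<and>
     (\<forall>xs. sign_seq H S xs 2 \<longrightarrow> H (xs 0) > 0)"

definition H_fun :: "nat \<Rightarrow> nat \<Rightarrow> (real \<Rightarrow> real) \<Rightarrow> (real \<Rightarrow> real) \<Rightarrow> real \<Rightarrow> real \<Rightarrow> real \<Rightarrow> real" where
  "H_fun s k fX fY a b x =
     Tbar fY (s - k) x / (\<Prod>j=1..k. mu_tilde fY (s - j))
     - a ^ k / (\<Prod>j=1..k. mu_tilde fX (s - j)) * Tbar fX (s - k) (a * x + b)"

end

theory Submission
  imports Defs
begin

text \<open>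
  Put TX = Tbar fX s and TY = Tbar fY s: both are continuous nonincreasing functions on
  [0,\<infinity>) starting at 1 and tending to 0.  If Tinv TY \<circ> TX were not convex, a line would
  cut its graph from below and then from above; read as an affine change of variables
  x \<mapsto> a x + b with a > 0, this makes H_0(x) = TY x - TX (a x + b) take the signs \<le> 0, +, -
  at three increasing points.  Since H_(j-1)(t) is the integral of H_j over [t,\<infinity>), each
  integration step back forces the integrand to take the signs -, +, - as well, so H_k
  changes sign twice starting with -, which the hypothesis forbids.
\<close>

lemma set_integral_nonneg:
  fixes h :: "'a \<Rightarrow> real"
  assumes "\<And>u. u \<in> A \<Longrightarrow> 0 \<le> h u"
  shows "0 \<le> (LINT u:A|M. h u)"
  unfolding set_lebesgue_integral_def
  by (rule integral_nonneg_AE) (use assms in \<open>auto simp: indicator_def\<close>)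

lemma set_integral_Ici_split:
  fixes h :: "real \<Rightarrow> real"
  assumes h: "set_integrable lborel {p..} h" and pq: "p \<le> q"
  shows "(LBINT u:{p..}. h u) = (LBINT u:{p..<q}. h u) + (LBINT u:{q..}. h u)"
proof -
  have "{p..} = {p..<q} \<union> {q..}" using pq by auto
  moreover have "set_integrable lborel {p..<q} h" "set_integrable lborel {q..} h"
    using pq by (auto intro: set_integrable_subset[OF h])
  moreover have "{p..<q} \<inter> {q..} = {}" by auto
  ultimately show ?thesis using set_integral_Un[of "{p..<q}" "{q..}" lborel h] by simp
qed

lemma set_integral_Ici_pos:
  fixes h :: "real \<Rightarrow> real"
  assumes h: "set_integrable lborel {0..} h" and nn: "\<And>u. 0 \<le> u \<Longrightarrow> 0 \<le> h u"
    and cont: "continuous_on {0..} h" and pos: "0 < h 0"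
  shows "0 < (LBINT u:{0..}. h u)"
proof -
  obtain d where d: "0 < d" and close: "\<And>y. 0 \<le> y \<Longrightarrow> y < d \<Longrightarrow> \<bar>h y - h 0\<bar> < h 0 / 2"
    using cont pos unfolding continuous_on_iff
    by (metis atLeast_iff dist_real_def diff_zero half_gt_zero order_refl abs_of_nonneg)
  have "0 < d / 2 * (h 0 / 2)" using d pos by simp
  also have "\<dots> = (LBINT u:{0..<d/2}. h 0 / 2)"
    using d by (simp add: set_integral_const)
  also have "\<dots> \<le> (LBINT u:{0..<d/2}. h u)"
  proof (rule set_integral_mono)
    show "set_integrable lborel {0..<d/2} (\<lambda>_. h 0 / 2)"
      using d by (auto simp: set_integrable_def
        intro!: integrable_divide integrable_mult_left integrable_real_indicator)
    show "set_integrable lborel {0..<d/2} h"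
      by (rule set_integrable_subset[OF h]) auto
    show "h 0 / 2 \<le> h u" if "u \<in> {0..<d/2}" for u
    proof -
      have "\<bar>h u - h 0\<bar> < h 0 / 2" using close that d by auto
      then show ?thesis by linarith
    qed
  qed
  also have "\<dots> \<le> (LBINT u:{0..}. h u)"
    using set_integral_Ici_split[OF h, of "d/2"] set_integral_nonneg[of "{d/2..}" h lborel] nn d
    by simp
  finally show ?thesis .
qed

lemma isCont_tail_integral:
  fixes h :: "real \<Rightarrow> real"
  assumes h: "integrable lborel h"
  shows "isCont (\<lambda>x. LBINT u:{x..}. h u) x0"
proof (rule continuous_at_sequentiallyI)
  fix X :: "nat \<Rightarrow> real" assume X: "X \<longlonglongrightarrow> x0"
  have [measurable]: "h \<in> borel_measurable lborel" using h by auto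
  show "(\<lambda>n. LBINT u:{X n..}. h u) \<longlonglongrightarrow> (LBINT u:{x0..}. h u)"
    unfolding set_lebesgue_integral_def
  proof (rule integral_dominated_convergence[where w="\<lambda>u. norm (h u)"])
    show "AE u in lborel. (\<lambda>n. indicator {X n..} u *\<^sub>R h u) \<longlonglongrightarrow> indicator {x0..} u *\<^sub>R h u"
      using AE_lborel_singleton[of x0]
    proof eventually_elim
      case (elim u)
      then consider "u < x0" | "x0 < u" by linarith
      then have "\<forall>\<^sub>F n in sequentially. indicator {X n..} u *\<^sub>R h u = indicator {x0..} u *\<^sub>R h u"
      proof cases
        case 1
        show ?thesis using order_tendstoD(1)[OF X 1]
          by eventually_elim (use 1 in \<open>auto simp: indicator_def\<close>)
      next
        case 2
        show ?thesis using order_tendstoD(2)[OF X 2]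
          by eventually_elim (use 2 in \<open>auto simp: indicator_def\<close>)
      qed
      then show ?case by (rule tendsto_eventually)
    qed
  qed (use h in \<open>auto simp: indicator_def\<close>)
qed

lemma tendsto_tail_integral_at_top:
  fixes h :: "real \<Rightarrow> real"
  assumes h: "integrable lborel h"
  shows "((\<lambda>x. LBINT u:{x..}. h u) \<longlongrightarrow> 0) at_top"
proof (rule tendsto_at_topI_sequentially)
  fix X :: "nat \<Rightarrow> real" assume X: "filterlim X at_top sequentially"
  have [measurable]: "h \<in> borel_measurable lborel" using h by auto
  have "(\<lambda>n. LBINT u:{X n..}. h u) \<longlonglongrightarrow> integral\<^sup>L lborel (\<lambda>u. 0 *\<^sub>R h u)"
    unfolding set_lebesgue_integral_def
  proof (rule integral_dominated_convergence[where w="\<lambda>u. norm (h u)"])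
    show "AE u in lborel. (\<lambda>n. indicator {X n..} u *\<^sub>R h u) \<longlonglongrightarrow> 0 *\<^sub>R h u"
    proof (rule AE_I2)
      fix u
      have "\<forall>\<^sub>F n in sequentially. u + 1 \<le> X n"
        using X by (simp add: filterlim_at_top)
      then have "\<forall>\<^sub>F n in sequentially. indicator {X n..} u *\<^sub>R h u = 0"
        by eventually_elim (auto simp: indicator_def)
      then show "(\<lambda>n. indicator {X n..} u *\<^sub>R h u) \<longlonglongrightarrow> 0 *\<^sub>R h u"
        by (simp add: tendsto_eventually)
    qed
  qed (use h in \<open>auto simp: indicator_def\<close>)
  then show "(\<lambda>n. LBINT u:{X n..}. h u) \<longlonglongrightarrow> 0" by simp
qed

definition survival_function :: "(real \<Rightarrow> real) \<Rightarrow> bool" where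
  "survival_function T \<longleftrightarrow> (\<forall>x. 0 \<le> T x) \<and> T 0 = 1 \<and> antimono_on {0..} T
     \<and> continuous_on {0..} T \<and> (T \<longlongrightarrow> 0) at_top"

lemma survival_function_tail:
  fixes g :: "real \<Rightarrow> real"
  assumes nn: "\<And>x. 0 \<le> g x" and g: "set_integrable lborel {0..} g"
    and mass: "(LBINT u:{0..}. g u) = \<mu>" and \<mu>: "0 < \<mu>"
  shows "survival_function (\<lambda>x. if x < 0 then 1 else (LBINT u:{x..}. g u) / \<mu>)"
    (is "survival_function ?T")
proof -
  define h where "h = (\<lambda>u. indicator {0..} u * g u)"
  have h: "integrable lborel h" using g by (simp add: h_def set_integrable_def)
  define G where "G x = (LBINT u:{x..}. h u) / \<mu>" for x
  have TG: "?T x = G x" if "0 \<le> x" for x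
    unfolding G_def h_def set_lebesgue_integral_def using that
    by (auto intro!: Bochner_Integration.integral_cong arg_cong[where f="\<lambda>y. y / \<mu>"]
      simp: indicator_def)
  have "0 \<le> ?T x" for x
    using set_integral_nonneg[of "{x..}" g lborel] nn \<mu> by simp
  moreover have "?T 0 = 1" using mass \<mu> by simp
  moreover have "antimono_on {0..} ?T"
  proof (rule monotone_onI)
    fix x y :: real assume "x \<in> {0..}" "y \<in> {0..}" "x \<le> y"
    moreover have "set_integrable lborel {x..} g"
      using \<open>x \<in> {0..}\<close> by (auto intro: set_integrable_subset[OF g])
    ultimately show "?T y \<le> ?T x"
      using set_integral_Ici_split[of x g y] set_integral_nonneg[of "{x..<y}" g lborel] nn \<mu>
      by (simp add: divide_right_mono)
  qed
  moreover have "continuous_on {0..} ?T"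
  proof (rule continuous_on_cong[THEN iffD1])
    show "continuous_on {0..} G"
      unfolding G_def using \<mu> by (intro continuous_at_imp_continuous_on ballI continuous_intros
        isCont_tail_integral[OF h]) auto
  qed (use TG in auto)
  moreover have "(?T \<longlongrightarrow> 0) at_top"
  proof (rule tendsto_cong[THEN iffD2])
    show "\<forall>\<^sub>F x in at_top. ?T x = G x"
      using TG by (auto simp: eventually_at_top_linorder intro!: exI[of _ 0])
    show "(G \<longlongrightarrow> 0) at_top"
      unfolding G_def using tendsto_divide_zero[OF tendsto_tail_integral_at_top[OF h]] .
  qed
  ultimately show ?thesis unfolding survival_function_def by blast
qed

lemma survival_function_Tbar:
  fixes f :: "real \<Rightarrow> real"
  assumes nn: "\<And>x. 0 \<le> f x" and int: "\<forall>j<s. set_integrable lborel {0..} (Tbar f j)"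
    and mass: "(LBINT u:{0..}. f u) = 1"
  shows "1 \<le> j \<Longrightarrow> j \<le> s \<Longrightarrow> survival_function (Tbar f j)"
proof (induction j)
  case (Suc m)
  have "(\<forall>x. 0 \<le> Tbar f m x) \<and> (LBINT u:{0..}. Tbar f m u) = mu_tilde f m \<and> 0 < mu_tilde f m"
  proof (cases "m = 0")
    case False
    with Suc have T: "survival_function (Tbar f m)" by simp
    have "0 < (LBINT u:{0..}. Tbar f m u)"
      using T int Suc.prems by (intro set_integral_Ici_pos) (auto simp: survival_function_def)
    with T False show ?thesis by (simp add: survival_function_def mu_tilde_def)
  qed (use nn mass in \<open>simp add: mu_tilde_def\<close>)
  moreover have "Tbar f (Suc m) = (\<lambda>x. if x < 0 then 1 else (LBINT u:{x..}. Tbar f m u) / mu_tilde f m)"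
    using Tbar_Suc by blast
  ultimately show ?case
    using survival_function_tail[of "Tbar f m"] int Suc.prems by simp
qed simp

lemma set_integral_Ici_affine:
  fixes F :: "real \<Rightarrow> real"
  assumes a: "0 < a" and F: "set_integrable lborel {a * t + b..} F"
  shows "set_integrable lborel {t..} (\<lambda>v. F (a * v + b))"
    and "(LBINT u:{a * t + b..}. F u) = a * (LBINT v:{t..}. F (a * v + b))"
proof -
  define \<phi> where "\<phi> = (\<lambda>u. indicator {a * t + b..} u *\<^sub>R F u)"
  have \<phi>: "integrable lborel \<phi>" using F by (simp add: \<phi>_def set_integrable_def)
  have \<phi>_affine: "\<phi> (b + a * v) = indicator {t..} v *\<^sub>R F (a * v + b)" for v
    using a by (auto simp: \<phi>_def indicator_def algebra_simps)
  have "integrable lborel (\<lambda>v. \<phi> (b + a * v))"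
    using lborel_integrable_real_affine[OF \<phi>, of a b] a by simp
  then show "set_integrable lborel {t..} (\<lambda>v. F (a * v + b))"
    unfolding set_integrable_def \<phi>_affine .
  have "integral\<^sup>L lborel \<phi> = \<bar>a\<bar> *\<^sub>R integral\<^sup>L lborel (\<lambda>v. \<phi> (b + a * v))"
    using lborel_integral_real_affine[of a \<phi> b] a by simp
  then show "(LBINT u:{a * t + b..}. F u) = a * (LBINT v:{t..}. F (a * v + b))"
    unfolding set_lebesgue_integral_def \<phi>_affine using a by (simp add: \<phi>_def)
qed

lemma H_fun_tail_integral:
  fixes fX fY :: "real \<Rightarrow> real"
  assumes intX: "\<forall>j<s. set_integrable lborel {0..} (Tbar fX j)"
    and intY: "\<forall>j<s. set_integrable lborel {0..} (Tbar fY j)"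
    and a: "0 < a" and j: "1 \<le> j" "j \<le> s" and t: "0 \<le> t" "0 \<le> a * t + b"
  shows "set_integrable lborel {t..} (H_fun s j fX fY a b)"
    and "H_fun s (j - 1) fX fY a b t = (LBINT u:{t..}. H_fun s j fX fY a b u)"
proof -
  obtain i where ji: "j = Suc i" using j by (cases j) auto
  define m where "m = s - j"
  have sm: "s - i = Suc m" using j ji by (simp add: m_def)
  have ms: "m < s" using j by (simp add: m_def)
  define PX where "PX = (\<Prod>k=1..i. mu_tilde fX (s - k))"
  define PY where "PY = (\<Prod>k=1..i. mu_tilde fY (s - k))"
  have iY: "set_integrable lborel {t..} (Tbar fY m)"
    by (rule set_integrable_subset[of _ "{0..}"]) (use intY ms t in auto)
  have iX: "set_integrable lborel {a * t + b..} (Tbar fX m)"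
    by (rule set_integrable_subset[of _ "{0..}"]) (use intX ms t in auto)
  note affine = set_integral_Ici_affine[OF a iX]
  have H: "H_fun s j fX fY a b = (\<lambda>u. Tbar fY m u * (1 / (PY * mu_tilde fY m))
       - Tbar fX m (a * u + b) * (a ^ j / (PX * mu_tilde fX m)))"
    unfolding H_fun_def PX_def PY_def ji m_def by auto
  show "set_integrable lborel {t..} (H_fun s j fX fY a b)"
    unfolding H by (intro set_integral_diff(1) set_integrable_mult_left iY affine(1))
  have Tbar_Y: "Tbar fY (Suc m) t = (LBINT u:{t..}. Tbar fY m u) / mu_tilde fY m"
    by (subst Tbar_Suc) (use t in simp)
  have Tbar_X: "Tbar fX (Suc m) (a * t + b) = (LBINT u:{a * t + b..}. Tbar fX m u) / mu_tilde fX m"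
    by (subst Tbar_Suc) (use t in simp)
  have "H_fun s (j - 1) fX fY a b t
      = Tbar fY (Suc m) t / PY - a ^ i / PX * Tbar fX (Suc m) (a * t + b)"
    unfolding H_fun_def PX_def PY_def using ji sm by simp
  also have "\<dots> = (LBINT u:{t..}. Tbar fY m u) * (1 / (PY * mu_tilde fY m))
       - (LBINT u:{t..}. Tbar fX m (a * u + b)) * (a ^ j / (PX * mu_tilde fX m))"
    unfolding Tbar_Y Tbar_X affine(2) ji by (simp add: field_simps)
  also have "\<dots> = (LBINT u:{t..}. H_fun s j fX fY a b u)"
    unfolding H by (subst set_integral_diff(2)) (auto intro!: set_integrable_mult_left iY affine(1))
  finally show "H_fun s (j - 1) fX fY a b t = (LBINT u:{t..}. H_fun s j fX fY a b u)" .
qed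

definition neg_pos_neg_from :: "(real \<Rightarrow> real) \<Rightarrow> real \<Rightarrow> bool" where
  "neg_pos_neg_from h x0 \<longleftrightarrow> (\<exists>p q r. x0 \<le> p \<and> p < q \<and> q < r \<and> h p < 0 \<and> 0 < h q \<and> h r < 0)"

lemma neg_pos_neg_from_tail_integrand:
  fixes G h :: "real \<Rightarrow> real"
  assumes int: "\<And>t. x0 \<le> t \<Longrightarrow> set_integrable lborel {t..} h"
    and G: "\<And>t. x0 \<le> t \<Longrightarrow> G t = (LBINT u:{t..}. h u)"
    and pqr: "x0 \<le> p" "p < q" "q < r" and signs: "G p \<le> 0" "0 < G q" "G r < 0"
  shows "neg_pos_neg_from h x0"
proof -
  have split: "G t = (LBINT u:{t..<t'}. h u) + G t'" if "x0 \<le> t" "t \<le> t'" for t t'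
    using set_integral_Ici_split[OF int[OF that(1)] that(2)] G that by simp
  have "\<exists>p'\<in>{p..<q}. h p' < 0"
  proof (rule ccontr)
    assume "\<not> ?thesis"
    then have "0 \<le> (LBINT u:{p..<q}. h u)"
      by (intro set_integral_nonneg) (auto simp: not_less)
    then show False using split[of p q] pqr signs by linarith
  qed
  moreover have "\<exists>q'\<in>{q..<r}. 0 < h q'"
  proof (rule ccontr)
    assume "\<not> ?thesis"
    then have "0 \<le> (LBINT u:{q..<r}. - h u)"
      by (intro set_integral_nonneg) (auto simp: not_less)
    moreover have "set_integrable lborel {q..<r} h"
      by (rule set_integrable_subset[OF int[of q]]) (use pqr in auto)
    then have "(LBINT u:{q..<r}. - h u) = - (LBINT u:{q..<r}. h u)"
      by (rule set_integral_uminus)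
    ultimately show False using split[of q r] pqr signs by linarith
  qed
  moreover have "\<exists>r'\<in>{r..}. h r' < 0"
  proof (rule ccontr)
    assume "\<not> ?thesis"
    then have "0 \<le> (LBINT u:{r..}. h u)"
      by (intro set_integral_nonneg) (auto simp: not_less)
    then show False using G[of r] pqr signs by linarith
  qed
  ultimately obtain p' q' r' where "p \<le> p'" "p' < q" "h p' < 0" "q \<le> q'" "q' < r" "0 < h q'"
    "r \<le> r'" "h r' < 0"
    by auto
  then show ?thesis
    unfolding neg_pos_neg_from_def using pqr by (intro exI[of _ p'] exI[of _ q'] exI[of _ r']) auto
qed

lemma neg_pos_neg_from_H_fun:
  fixes fX fY :: "real \<Rightarrow> real"
  assumes intX: "\<forall>j<s. set_integrable lborel {0..} (Tbar fX j)"
    and intY: "\<forall>j<s. set_integrable lborel {0..} (Tbar fY j)"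
    and a: "0 < a" and x0: "0 \<le> x0" "0 \<le> a * x0 + b"
    and pqr: "x0 \<le> p" "p < q" "q < r"
    and signs: "H_fun s 0 fX fY a b p \<le> 0" "0 < H_fun s 0 fX fY a b q" "H_fun s 0 fX fY a b r < 0"
  shows "1 \<le> j \<Longrightarrow> j \<le> s \<Longrightarrow> neg_pos_neg_from (H_fun s j fX fY a b) x0"
proof (induction j)
  case (Suc i)
  have t: "0 \<le> t" "0 \<le> a * t + b" if "x0 \<le> t" for t
  proof -
    have "a * x0 \<le> a * t" using that a by simp
    then show "0 \<le> t" "0 \<le> a * t + b" using that x0 by auto
  qed
  note H_tail = H_fun_tail_integral[OF intX intY a _ Suc.prems(2) t, simplified]
  show ?case
  proof (cases i)
    case 0
    show ?thesis by (rule neg_pos_neg_from_tail_integrand[OF H_tail pqr]) (use signs 0 in auto)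
  next
    case (Suc i')
    with Suc.IH Suc.prems obtain p' q' r' where "x0 \<le> p'" "p' < q'" "q' < r'"
      "H_fun s i fX fY a b p' < 0" "0 < H_fun s i fX fY a b q'" "H_fun s i fX fY a b r' < 0"
      unfolding neg_pos_neg_from_def by auto
    then show ?thesis using neg_pos_neg_from_tail_integrand[OF H_tail] by simp
  qed
qed simp

lemma not_sign_changes_le2_pmp_if_neg_pos_neg:
  assumes "neg_pos_neg_from H x0" and "0 \<le> x0"
  shows "\<not> sign_changes_le2_pmp H {0..}"
proof
  obtain p q r where pqr: "x0 \<le> p" "p < q" "q < r" "H p < 0" "0 < H q" "H r < 0"
    using assms(1) unfolding neg_pos_neg_from_def by blast
  define xs where "xs n = (if n = 0 then p else if n = 1 then q else r)" for n :: nat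
  have "sign_seq H {0..} xs 2"
    unfolding sign_seq_def xs_def using pqr assms(2)
    by (auto simp: less_Suc_eq mult_neg_pos mult_pos_neg)
  moreover assume "sign_changes_le2_pmp H {0..}"
  ultimately have "H (xs 0) > 0" unfolding sign_changes_le2_pmp_def by blast
  then show False using pqr by (simp add: xs_def)
qed

definition affine_crossing :: "(real \<Rightarrow> real) \<Rightarrow> (real \<Rightarrow> real) \<Rightarrow> bool" where
  "affine_crossing TX TY \<longleftrightarrow> (\<exists>a>0. \<exists>b z1 z z2. 0 \<le> z1 \<and> z1 < z \<and> z < z2 \<and> 0 \<le> a * z1 + b
     \<and> TY z1 \<le> TX (a * z1 + b) \<and> TX (a * z + b) < TY z \<and> TY z2 < TX (a * z2 + b))"

lemma affine_crossingI:
  assumes "0 \<le> y1" "0 \<le> z1" "z1 < z" "z < z2" "y1 < y2"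
    and collinear: "(y - y1) * (z2 - z1) = (y2 - y1) * (z - z1)"
    and "TY z1 \<le> TX y1" "TX y < TY z" "TY z2 < TX y2"
  shows "affine_crossing TX TY"
proof -
  define a where "a = (y2 - y1) / (z2 - z1)"
  define b where "b = y1 - a * z1"
  have z12: "z2 - z1 \<noteq> 0" using assms by simp
  have "a * (z - z1) = (y2 - y1) * (z - z1) / (z2 - z1)" by (simp add: a_def)
  also have "\<dots> = y - y1" using z12 by (simp flip: collinear)
  finally have "a * z + b = y" by (simp add: b_def algebra_simps)
  moreover have "a * (z2 - z1) = y2 - y1" using z12 by (simp add: a_def)
  then have "a * z2 + b = y2" by (simp add: b_def algebra_simps)
  moreover have "a * z1 + b = y1" by (simp add: b_def)
  moreover have "0 < a" using assms by (simp add: a_def)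
  ultimately show ?thesis unfolding affine_crossing_def using assms by metis
qed

lemma not_affine_crossing_Tbar:
  fixes fX fY :: "real \<Rightarrow> real"
  assumes intX: "\<forall>j<s. set_integrable lborel {0..} (Tbar fX j)"
    and intY: "\<forall>j<s. set_integrable lborel {0..} (Tbar fY j)"
    and k: "1 \<le> k" "k \<le> s"
    and sign_changes: "\<forall>a>0. \<forall>b. sign_changes_le2_pmp (H_fun s k fX fY a b) {0..}"
  shows "\<not> affine_crossing (Tbar fX s) (Tbar fY s)"
proof
  assume "affine_crossing (Tbar fX s) (Tbar fY s)"
  then obtain a b z1 z z2 where a: "0 < a" and z: "0 \<le> z1" "z1 < z" "z < z2" "0 \<le> a * z1 + b"
    and signs: "Tbar fY s z1 \<le> Tbar fX s (a * z1 + b)" "Tbar fX s (a * z + b) < Tbar fY s z"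
      "Tbar fY s z2 < Tbar fX s (a * z2 + b)"
    unfolding affine_crossing_def by blast
  have "H_fun s 0 fX fY a b x = Tbar fY s x - Tbar fX s (a * x + b)" for x
    by (simp add: H_fun_def)
  then have "neg_pos_neg_from (H_fun s k fX fY a b) z1"
    using neg_pos_neg_from_H_fun[OF intX intY a z(1,4) order_refl z(2,3) _ _ _ k] signs by simp
  then show False
    using not_sign_changes_le2_pmp_if_neg_pos_neg z(1) sign_changes a by blast
qed

lemma survival_function_antimono:
  "survival_function T \<Longrightarrow> 0 \<le> x \<Longrightarrow> x \<le> y \<Longrightarrow> T y \<le> T x"
  unfolding survival_function_def monotone_on_def by auto

lemma survival_function_less:
  assumes "survival_function T" and "0 < e"
  obtains x where "0 \<le> x" "T x < e"
proof -
  have "\<forall>\<^sub>F x in at_top. 0 \<le> x \<and> T x < e"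
    using assms order_tendstoD(2)[of T 0 at_top e]
    by (auto simp: survival_function_def intro: eventually_conj eventually_ge_at_top)
  then obtain N where "\<And>x. N \<le> x \<Longrightarrow> 0 \<le> x \<and> T x < e"
    by (auto simp: eventually_at_top_linorder)
  then show thesis using that[of N] by auto
qed

lemma survival_function_continuous_at:
  assumes "survival_function T" and "0 \<le> x" and "0 < e"
  obtains d where "0 < d" and "\<And>y. 0 \<le> y \<Longrightarrow> \<bar>y - x\<bar> < d \<Longrightarrow> \<bar>T y - T x\<bar> < e"
proof -
  have "continuous_on {0..} T" using assms(1) by (simp add: survival_function_def)
  then obtain d where "0 < d" "\<forall>y\<in>{0..}. dist y x < d \<longrightarrow> dist (T y) (T x) < e"
    using assms(2,3) unfolding continuous_on_iff by (meson atLeast_iff)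
  then show thesis using that by (auto simp: dist_real_def)
qed

lemma survival_function_last_level:
  assumes T: "survival_function T" and l: "0 < l" "l \<le> 1"
  obtains ys where "0 \<le> ys" "l \<le> T ys" "\<And>y. ys < y \<Longrightarrow> T y < l"
proof -
  define S where "S = {y. 0 \<le> y \<and> l \<le> T y}"
  obtain Y where Y: "0 \<le> Y" "T Y < l" using survival_function_less[OF T l(1)] .
  have bdd: "bdd_above S"
  proof (rule bdd_aboveI)
    show "y \<le> Y" if "y \<in> S" for y
      using that Y survival_function_antimono[OF T, of Y y] by (force simp: S_def)
  qed
  have "0 \<in> S" using T l by (simp add: S_def survival_function_def)
  define ys where "ys = Sup S"
  have ys: "0 \<le> ys" using cSup_upper[OF \<open>0 \<in> S\<close> bdd] by (simp add: ys_def)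
  have "l \<le> T ys"
  proof (rule ccontr)
    assume "\<not> l \<le> T ys"
    with survival_function_continuous_at[OF T ys, of "l - T ys"]
    obtain d where "0 < d" and d: "\<And>y. 0 \<le> y \<Longrightarrow> \<bar>y - ys\<bar> < d \<Longrightarrow> \<bar>T y - T ys\<bar> < l - T ys"
      by auto
    obtain y where y: "y \<in> S" "ys - d < y"
      using less_cSupD[of S "ys - d"] \<open>0 \<in> S\<close> \<open>0 < d\<close> by (auto simp: ys_def)
    have "y \<le> ys" using cSup_upper[OF y(1) bdd] by (simp add: ys_def)
    then show False using d[of y] y by (auto simp: S_def)
  qed
  moreover have "T y < l" if "ys < y" for y
    using that ys cSup_upper[of y S] bdd by (force simp: S_def ys_def)
  ultimately show thesis using that ys by blast
qed

lemma Tinv_sublevel: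
  assumes "survival_function T" and "0 < u"
  shows "{y. 0 \<le> y \<and> T y \<le> u} \<noteq> {}" and "bdd_below {y. 0 \<le> y \<and> T y \<le> u}"
proof -
  obtain x where "0 \<le> x" "T x < u" using survival_function_less[OF assms] .
  then show "{y. 0 \<le> y \<and> T y \<le> u} \<noteq> {}" by auto
  show "bdd_below {y. 0 \<le> y \<and> T y \<le> u}" by (rule bdd_belowI[of _ 0]) simp
qed

lemma Tinv_nonneg:
  assumes "survival_function T" and "0 < u"
  shows "0 \<le> Tinv T u"
  unfolding Tinv_def by (rule cInf_greatest[OF Tinv_sublevel(1)[OF assms]]) simp

lemma less_below_Tinv:
  assumes "survival_function T" and "0 < u" and z: "0 \<le> z" "z < Tinv T u"
  shows "u < T z"
proof (rule ccontr)
  assume "\<not> u < T z"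
  with z have "Tinv T u \<le> z"
    unfolding Tinv_def by (intro cInf_lower Tinv_sublevel(2)[OF assms(1,2)]) simp
  with z show False by simp
qed

lemma at_Tinv_le:
  assumes T: "survival_function T" and u: "0 < u"
  shows "T (Tinv T u) \<le> u"
proof (rule ccontr)
  define S where "S = {y. 0 \<le> y \<and> T y \<le> u}"
  assume "\<not> ?thesis"
  with survival_function_continuous_at[OF T Tinv_nonneg[OF T u], of "T (Tinv T u) - u"]
  obtain d where "0 < d"
    and d: "\<And>y. 0 \<le> y \<Longrightarrow> \<bar>y - Tinv T u\<bar> < d \<Longrightarrow> \<bar>T y - T (Tinv T u)\<bar> < T (Tinv T u) - u"
    by auto
  have "Inf S < Inf S + d" using \<open>0 < d\<close> by simp
  moreover have "S \<noteq> {}" using Tinv_sublevel(1)[OF T u] by (simp add: S_def)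
  ultimately obtain z where z: "z \<in> S" "z < Tinv T u + d"
    using cInf_lessD[of S "Inf S + d"] by (auto simp: S_def Tinv_def)
  have "Tinv T u \<le> z"
    unfolding Tinv_def using z(1) Tinv_sublevel(2)[OF T u] by (intro cInf_lower) (auto simp: S_def)
  then show False using d[of z] z by (auto simp: S_def)
qed

lemma Tinv_antimono:
  assumes "survival_function T" and "0 < u'" "u' \<le> u"
  shows "Tinv T u \<le> Tinv T u'"
  unfolding Tinv_def using assms
  by (intro cInf_superset_mono Tinv_sublevel) auto

lemma less_survival_if_not_affine_crossing:
  assumes TX: "survival_function TX" and TY: "survival_function TY"
    and no_crossing: "\<not> affine_crossing TX TY"
    and pq: "0 \<le> p" "p < q" and pos: "0 < TY q"
  shows "TY q < TY p"
proof (rule ccontr)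
  define l where "l = TY p"
  assume "\<not> TY q < TY p"
  moreover have "TY q \<le> TY p" using survival_function_antimono[OF TY pq(1)] pq by simp
  ultimately have flat: "TY q = l" by (simp add: l_def)
  have l: "0 < l" "l \<le> 1"
    using pos flat survival_function_antimono[OF TY order_refl pq(1)] TY
    by (auto simp: l_def survival_function_def)
  obtain z2 where z2: "0 \<le> z2" "TY z2 < l" using survival_function_less[OF TY l(1)] .
  have "q < z2" using z2 flat survival_function_antimono[OF TY z2(1), of q] by force
  obtain ys where ys: "0 \<le> ys" "l \<le> TX ys" "\<And>y. ys < y \<Longrightarrow> TX y < l"
    using survival_function_last_level[OF TX l] by blast
  obtain d where "0 < d"
    and d: "\<And>y. 0 \<le> y \<Longrightarrow> \<bar>y - ys\<bar> < d \<Longrightarrow> \<bar>TX y - TX ys\<bar> < l - TY z2"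
    using survival_function_continuous_at[OF TX ys(1), of "l - TY z2"] z2 by auto
  define t where "t = (z2 - p) / (q - p)"
  have t: "1 < t" using pq \<open>q < z2\<close> by (simp add: t_def)
  define e where "e = d / (2 * t)"
  have e: "0 < e" "t * e = d / 2" using \<open>0 < d\<close> t by (simp_all add: e_def)
  \<comment> \<open>The affine map sending p, q, z2 to ys, ys + e, ys + t * e exhibits a crossing.\<close>
  have "affine_crossing TX TY"
  proof (rule affine_crossingI[of ys p q z2 "ys + t * e" "ys + e"])
    show "(ys + e - ys) * (z2 - p) = (ys + t * e - ys) * (q - p)"
      using pq by (simp add: t_def)
    show "TX (ys + e) < TY q" using ys(3)[of "ys + e"] e flat by simp
    have "\<bar>TX (ys + t * e) - TX ys\<bar> < l - TY z2" using d[of "ys + t * e"] ys \<open>0 < d\<close> unfolding e(2) by simp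
    then show "TY z2 < TX (ys + t * e)" using ys(2) by linarith
  qed (use pq ys \<open>q < z2\<close> e \<open>0 < d\<close> t in \<open>auto simp: l_def\<close>)
  with no_crossing show False ..
qed

lemma Tinv_comp_below_line:
  assumes TX: "survival_function TX" and TY: "survival_function TY"
    and no_crossing: "\<not> affine_crossing TX TY"
    and y: "0 \<le> y1" "y1 < w" "w < y2" "0 < TX y2" and m: "0 < m"
    and above_y2: "Tinv TY (TX y2) < Tinv TY (TX y1) + m * (y2 - y1)"
  shows "Tinv TY (TX w) \<le> Tinv TY (TX y1) + m * (w - y1)"
proof (rule ccontr)
  define c where "c y = Tinv TY (TX y)" for y
  assume "\<not> ?thesis"
  then have below_w: "c y1 + m * (w - y1) < c w" by (simp add: c_def)
  have pos: "0 < TX y1" "0 < TX w"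
    using y survival_function_antimono[OF TX] by (meson less_le_trans less_imp_le order_trans)+
  have c_nonneg: "0 \<le> c y" if "0 < TX y" for y
    unfolding c_def by (rule Tinv_nonneg[OF TY that])
  \<comment> \<open>Inverting the line gives the affine map z \<mapsto> y1 + (z - c y1) / m of the crossing.\<close>
  have "affine_crossing TX TY"
  proof (rule affine_crossingI[of y1 "c y1" "c y1 + m * (w - y1)" "c y1 + m * (y2 - y1)" y2 w])
    show "TX w < TY (c y1 + m * (w - y1))"
      using less_below_Tinv[OF TY pos(2)] below_w c_nonneg[OF pos(1)] m y by (simp add: c_def)
    show "TY (c y1 + m * (y2 - y1)) < TX y2"
    proof (cases "0 < TY (c y1 + m * (y2 - y1))")
      case True
      have "TY (c y1 + m * (y2 - y1)) < TY (c y2)"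
        using less_survival_if_not_affine_crossing[OF TX TY no_crossing c_nonneg[OF y(4)]]
          above_y2 True by (simp add: c_def)
      also have "\<dots> \<le> TX y2" unfolding c_def by (rule at_Tinv_le[OF TY y(4)])
      finally show ?thesis .
    qed (use y in auto)
  qed (use y m c_nonneg[OF pos(1)] at_Tinv_le[OF TY pos(1)] in \<open>auto simp: c_def algebra_simps\<close>)
  with no_crossing show False ..
qed

lemma Tinv_comp_chord:
  assumes TX: "survival_function TX" and TY: "survival_function TY"
    and no_crossing: "\<not> affine_crossing TX TY"
    and y: "0 \<le> y1" "y1 < y2" "0 < TX y2" and t: "0 < t" "t < 1"
  shows "Tinv TY (TX ((1 - t) * y1 + t * y2)) \<le> (1 - t) * Tinv TY (TX y1) + t * Tinv TY (TX y2)"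
proof (rule ccontr)
  define c where "c y = Tinv TY (TX y)" for y
  define w where "w = (1 - t) * y1 + t * y2"
  assume "\<not> ?thesis"
  then have above_chord: "(1 - t) * c y1 + t * c y2 < c w" by (simp add: c_def w_def)
  have w_y1: "w - y1 = t * (y2 - y1)" and y2_w: "y2 - w = (1 - t) * (y2 - y1)"
    by (simp_all add: w_def algebra_simps)
  have w: "y1 < w" "w < y2"
    using w_y1 y2_w mult_pos_pos[of t "y2 - y1"] mult_pos_pos[of "1 - t" "y2 - y1"] t y by linarith+
  have "c y1 \<le> c y2"
    unfolding c_def using y survival_function_antimono[OF TX] by (intro Tinv_antimono[OF TY]) auto
  define chord where "chord = (c y2 - c y1) / (y2 - y1)"
  define secant where "secant = (c w - c y1) / (w - y1)"
  have "chord * (w - y1) = t * (c y2 - c y1)" unfolding w_y1 chord_def using y by simp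
  also have "\<dots> < c w - c y1" using above_chord by (simp add: algebra_simps)
  finally have "chord < secant" using w by (simp add: secant_def field_simps)
  define m where "m = (chord + secant) / 2"
  have "0 \<le> chord" using \<open>c y1 \<le> c y2\<close> y by (simp add: chord_def)
  then have m: "chord < m" "m < secant" "0 < m"
    using \<open>chord < secant\<close> by (simp_all add: m_def)
  have "c y2 < c y1 + m * (y2 - y1)" using m y by (simp add: chord_def field_simps)
  then have "c w \<le> c y1 + m * (w - y1)"
    using Tinv_comp_below_line[OF TX TY no_crossing y(1) w y(3) m(3)] by (simp add: c_def)
  moreover have "m * (w - y1) < c w - c y1" using m w by (simp add: secant_def field_simps)
  ultimately show False by simp
qed

lemma convex_on_Tinv_comp:
  assumes TX: "survival_function TX" and TY: "survival_function TY"
    and no_crossing: "\<not> affine_crossing TX TY"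
  shows "convex_on {x. 0 \<le> x \<and> 0 < TX x} (\<lambda>x. Tinv TY (TX x))"
proof (rule convex_on_linorderI)
  show "convex {x. 0 \<le> x \<and> 0 < TX x}"
    unfolding is_interval_convex_1[symmetric] is_interval_1
    using survival_function_antimono[OF TX] by (force intro: less_le_trans)
  fix t x y :: real
  assume "0 < t" "t < 1" "x \<in> {x. 0 \<le> x \<and> 0 < TX x}" "y \<in> {x. 0 \<le> x \<and> 0 < TX x}" "x < y"
  then show "Tinv TY (TX ((1 - t) *\<^sub>R x + t *\<^sub>R y)) \<le> (1 - t) * Tinv TY (TX x) + t * Tinv TY (TX y)"
    using Tinv_comp_chord[OF TX TY no_crossing] by simp
qed

lemma distributed_density_integral_Ici_eq_1:
  fixes f :: "real \<Rightarrow> real"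
  assumes M: "prob_space M" and X: "distributed M lborel X (\<lambda>x. ennreal (f x))"
    and nn: "\<And>x. 0 \<le> f x" and support: "\<And>x. x < 0 \<Longrightarrow> f x = 0"
    and f: "set_integrable lborel {0..} f"
  shows "(LBINT u:{0..}. f u) = 1"
proof -
  have restrict: "indicator {0..} u *\<^sub>R f u = f u" for u
    using support[of u] by (auto simp: indicator_def)
  have "integrable lborel f" using f unfolding set_integrable_def restrict .
  have "(\<integral>\<^sup>+x. ennreal (f x) \<partial>lborel) = emeasure M (X -` UNIV \<inter> space M)"
    using distributed_emeasure[OF X, of UNIV] by simp
  also have "\<dots> = 1" using M by (simp add: prob_space.emeasure_space_1)
  finally have "ennreal (integral\<^sup>L lborel f) = 1"
    using nn_integral_eq_integral[OF \<open>integrable lborel f\<close>] nn by simp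
  then have "integral\<^sup>L lborel f = 1"
    using integral_nonneg_AE[of f lborel] nn by (simp add: ennreal_eq_1)
  then show ?thesis unfolding set_lebesgue_integral_def restrict .
qed

theorem theorem7:
  fixes M :: "'a measure" and X Y :: "'a \<Rightarrow> real" and fX fY :: "real \<Rightarrow> real"
    and s k :: nat
  assumes "prob_space M"
    and "distributed M lborel X (\<lambda>x. ennreal (fX x))"
    and "distributed M lborel Y (\<lambda>x. ennreal (fY x))"
    and "\<forall>x. 0 \<le> fX x" and "\<forall>x. 0 \<le> fY x"
    and "\<forall>x<0. fX x = 0" and "\<forall>x<0. fY x = 0"
    and "cdf (distr M borel X) \<in> distF_family"
    and "cdf (distr M borel Y) \<in> distF_family"
    and "\<forall>j<s. set_integrable lborel {0..} (Tbar fX j)"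
    and "\<forall>j<s. set_integrable lborel {0..} (Tbar fY j)"
    and "1 \<le> s" and "1 \<le> k" and "k \<le> s"
    and "\<forall>a>0. \<forall>b. sign_changes_le2_pmp (H_fun s k fX fY a b) {0..}"
  shows "s_IFR_le s fX fY"
proof -
  have "set_integrable lborel {0..} fX" "set_integrable lborel {0..} fY"
    using assms(10,11)[rule_format, of 0] assms(12) by simp_all
  then have "(LBINT u:{0..}. fX u) = 1" "(LBINT u:{0..}. fY u) = 1"
    using distributed_density_integral_Ici_eq_1[OF assms(1)] assms(2-7) by auto
  then have "survival_function (Tbar fX s)" "survival_function (Tbar fY s)"
    using survival_function_Tbar assms(4,5,10,11,12) by auto
  moreover have "\<not> affine_crossing (Tbar fX s) (Tbar fY s)"
    by (rule not_affine_crossing_Tbar[OF assms(10,11,13,14,15)])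
  ultimately show ?thesis unfolding s_IFR_le_def by (rule convex_on_Tinv_comp)
qed

end
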